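(* Assume $D=\sum_{k=1}^K N_k$ (i.e. $\sum_k N_k\le N_T$). Let $\mathcal G$ be a graph on $N_I$ vertices for which there exists a permutation matrix $\mathbf P$ with $\mathbf A_{\mathcal G}=\mathbf P\bar{\mathbf A}_{\mathcal G}\mathbf P^T$ and $\sum_{m=n+1}^{N_I}\bar{\mathbf A}_{\mathcal G}(n,m)=\min\{2L-1,N_I-n\}$ for $1\le n\le N_I-1$. Then $$\mathcal U_{\mathrm{fully}}=\mathcal U_{\mathcal G}\cup\mathcal N_{\mathcal U}.$$ Consequently $\mathcal H_{\mathrm{fully}}=\mathcal H_{\mathcal G}\cup\mathcal N$, where $\mathcal H_{\mathrm{fully}}=\{\mathbf H_d+\mathbf U^H\mathbf G:\mathbf U\in\mathcal U_{\mathrm{fully}}\}$, $\mathcal H_{\mathcal G}=\{\mathbf H_d+\mathbf U^H\mathbf G:\mathbf U\in\mathcal U_{\mathcal G}\}$ and $\mathcal N=\{\mathbf H_d+\mathbf U^H\mathbf G:\mathbf U\in\mathcal N_{\mathcal U}\}$.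
   Context: Let $N_I,N_T,K\ge1$, $N_1,\dots,N_K\ge1$ be integers, $Z_0>0$, and let $\mathbf H_{d,k}\in\mathbb C^{N_k\times N_T}$, $\mathbf H_{r,k}\in\mathbb C^{N_k\times N_I}$, $\mathbf G\in\mathbb C^{N_I\times N_T}$ be given. Let $\mathbf H_d$ and $\mathbf H_r\in\mathbb C^{(\sum_k N_k)\times N_I}$ be the vertical stackings of the $\mathbf H_{d,k}$ and of the $\mathbf H_{r,k}$, respectively. $D=\min\{\sum_k N_k,N_T\}$, $L=\min\{D,N_I/2\}$. A graph $\mathcal G=(\mathcal V,\mathcal E)$ is a simple undirected graph with vertices $V_1,\dots,V_{N_I}$; its adjacency matrix $\mathbf A_{\mathcal G}$ is the symmetric $0$–$1$ matrix with zero diagonal and $\mathbf A_{\mathcal G}(n,m)=1$ iff $(V_n,V_m)\in\mathcal E$; $\mathcal B_{\mathcal G}=\{\mathbf B\in\mathbb R^{N_I\times N_I}: B_{n,m}=0\ \forall n\ne m \text{ with }(V_n,V_m)\notin\mathcal E\}$. Define $\mathcal U_{\mathrm{fully}}=\{(\mathbf H_r\boldsymbol\Theta)^H : \boldsymbol\Theta=(\mathbf I+\mathsf iZ_0\mathbf B)^{-1}(\mathbf I-\mathsf iZ_0\mathbf B),\ \mathbf B\in\mathbb R^{N_I\times N_I},\ \mathbf B=\mathbf B^T\}$ and $\mathcal U_{\mathcal G}$ the same set with the additional constraint $\mathbf B\in\mathcal B_{\mathcal G}$. For $\mathbf U\in\mathbb C^{N_I\times\sum_k N_k}$ let $\mathbf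 M_{\mathbf U}=[\mathcal R(\mathsf iZ_0(\mathbf H_r^H+\mathbf U))\ \ \mathcal I(\mathsf iZ_0(\mathbf H_r^H+\mathbf U))]\in\mathbb R^{N_I\times 2\sum_k N_k}$, where $\mathcal R,\mathcal I$ denote entrywise real and imaginary parts, and let $\mathcal N_{\mathcal U}=\{\mathbf U\in\mathcal U_{\mathrm{fully}}:\ \mathbf M_{\mathbf U}\text{ has a singular } n\times n \text{ submatrix for some } n\le 2\sum_k N_k\}$. *)

theory Defs
  imports "Jordan_Normal_Form.Schur_Decomposition"
          "Jordan_Normal_Form.Gauss_Jordan_Elimination"
          "Jordan_Normal_Form.DL_Submatrix"
begin

text \<open>Matrices are Jordan_Normal_Form matrices; indices are 0-based
 (vertex V_n of the paper is index n-1).  The per-user channels H_{d,k}, H_{r,k}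
 enter only through their vertical stackings H_d, H_r, which are taken directly
 as matrices with sum_k N_k rows.\<close>

definition simple_graph :: "nat \<Rightarrow> (nat \<Rightarrow> nat \<Rightarrow> bool) \<Rightarrow> bool" where
  "simple_graph NI E \<longleftrightarrow> (\<forall>n<NI. \<forall>m<NI. E n m = E m n) \<and> (\<forall>n<NI. \<not> E n n)"

definition adj_mat :: "nat \<Rightarrow> (nat \<Rightarrow> nat \<Rightarrow> bool) \<Rightarrow> real mat" where
  "adj_mat NI E = mat NI NI (\<lambda>(n,m). if E n m then 1 else 0)"

definition perm_matrix :: "nat \<Rightarrow> real mat \<Rightarrow> bool" where
  "perm_matrix n P \<longleftrightarrow> (\<exists>p. p permutes {..<n} \<and> P = mat n n (\<lambda>(i,j). if p i = j then 1 else 0))"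

definition theta :: "real \<Rightarrow> real mat \<Rightarrow> complex mat" where
  "theta Z0 B = (let n = dim_row B; Bc = map_mat complex_of_real B in
     the (mat_inverse (1\<^sub>m n + (\<i> * complex_of_real Z0) \<cdot>\<^sub>m Bc)) *
     (1\<^sub>m n - (\<i> * complex_of_real Z0) \<cdot>\<^sub>m Bc))"

definition U_fully :: "complex mat \<Rightarrow> real \<Rightarrow> nat \<Rightarrow> complex mat set" where
  "U_fully Hr Z0 NI = {mat_adjoint (Hr * theta Z0 B) | B.
      B \<in> carrier_mat NI NI \<and> B = transpose_mat B}"

definition B_graph :: "nat \<Rightarrow> (nat \<Rightarrow> nat \<Rightarrow> bool) \<Rightarrow> real mat set" where
  "B_graph NI E = {B \<in> carrier_mat NI NI. \<forall>n<NI. \<forall>m<NI. n \<noteq> m \<and> \<not> E n m \<longrightarrow> B $$ (n,m) = 0}"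

definition U_graph :: "complex mat \<Rightarrow> real \<Rightarrow> nat \<Rightarrow> (nat \<Rightarrow> nat \<Rightarrow> bool) \<Rightarrow> complex mat set" where
  "U_graph Hr Z0 NI E = {mat_adjoint (Hr * theta Z0 B) | B.
      B \<in> carrier_mat NI NI \<and> B = transpose_mat B \<and> B \<in> B_graph NI E}"

definition M_U :: "complex mat \<Rightarrow> real \<Rightarrow> complex mat \<Rightarrow> real mat" where
  "M_U Hr Z0 U = (let X = (\<i> * complex_of_real Z0) \<cdot>\<^sub>m (mat_adjoint Hr + U);
                      NI = dim_col Hr; Nt = dim_row Hr in
     mat NI (2 * Nt) (\<lambda>(i,j). if j < Nt then Re (X $$ (i,j)) else Im (X $$ (i, j - Nt))))"

definition N_U :: "complex mat \<Rightarrow> real \<Rightarrow> nat \<Rightarrow> complex mat set" where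
  "N_U Hr Z0 NI = {U \<in> U_fully Hr Z0 NI. \<exists>n I J. 1 \<le> n \<and> n \<le> 2 * dim_row Hr \<and>
      I \<subseteq> {..<NI} \<and> J \<subseteq> {..<2 * dim_row Hr} \<and> card I = n \<and> card J = n \<and>
      det (submatrix (M_U Hr Z0 U) I J) = 0}"

definition H_set :: "complex mat \<Rightarrow> complex mat \<Rightarrow> complex mat set \<Rightarrow> complex mat set" where
  "H_set Hd G S = (\<lambda>U. Hd + mat_adjoint U * G) ` S"

definition L_val :: "nat \<Rightarrow> nat \<Rightarrow> nat list \<Rightarrow> real" where
  "L_val NI NT Ns = min (real (min (sum_list Ns) NT)) (real NI / 2)"

end

theory Submission
  imports Defs
begin

(*
  Write C = i Z0 B and Theta = (1 + C)^-1 (1 - C). Since B is real symmetric, (1 + C)^H = 1 - C,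
  so U = Theta^H Hr^H is equivalent to (1 - C) U = (1 + C) Hr^H, and splitting real and imaginary
  parts turns this into the real linear system B M_U = [Re (U - Hr^H)  Im (U - Hr^H)], with M_U
  independent of B. Hence U lies in U_fully iff the system has a symmetric solution, and in U_G
  iff it has one supported on the graph.

  If 2 D >= N_I the degree condition makes the graph complete. Otherwise, with c = 2 D, the
  permuted adjacency matrix says that along the ordering every vertex has c - 1 later neighbours
  until only c - 1 vertices remain, and these form a clique. When all minors of M_U are nonzero
  (U not in N_U), a graph-supported symmetric solution is built row by row along the ordering:
  the entries towards earlier vertices are forced by symmetry, and the c entries on the vertex
  and its later neighbours solve c equations through a nonsingular c x c minor. The last c - 1
  rows are then completed symmetrically through a nonsingular (c - 1) x (c - 1) minor; the
  compatibility this needs is inherited from the symmetric solution we started from.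
*)

section \<open>Nonsingular minors\<close>

lemma bij_betw_pick:
  assumes "finite I"
  shows "bij_betw (pick I) {..<card I} I"
proof (rule bij_betw_imageI)
  show "inj_on (pick I) {..<card I}"
  proof (rule strict_mono_on_imp_inj_on, rule strict_mono_onI)
    fix m n assume "m \<in> {..<card I}" "n \<in> {..<card I}" "m < n"
    then show "pick I m < pick I n" using pick_mono[of n I m] by simp
  qed
  show "pick I ` {..<card I} = I"
  proof (intro subset_antisym subsetI)
    fix i assume i: "i \<in> I"
    then have "card {a\<in>I. a < i} < card I"
      using assms by (intro psubset_card_mono) auto
    then show "i \<in> pick I ` {..<card I}"
      using pick_card_in_set[OF i] by force
  next
    fix i assume "i \<in> pick I ` {..<card I}"
    then obtain k where "k < card I" "i = pick I k" by auto
    then show "i \<in> I" using pick_in_set[of k I] by simp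
  qed
qed

lemma sum_pick:
  assumes "finite I"
  shows "(\<Sum>k<card I. f (pick I k)) = (\<Sum>i\<in>I. f i)"
  using sum.reindex_bij_betw[OF bij_betw_pick[OF assms], of f] by simp

lemma index_mult_mat_sum:
  assumes "A \<in> carrier_mat a b" "C \<in> carrier_mat b d" "i < a" "j < d"
  shows "(A * C) $$ (i, j) = (\<Sum>k<b. A $$ (i, k) * C $$ (k, j))"
  using assms by (simp add: scalar_prod_def atLeast0LessThan)

lemma det_nonzero_obtain_inverse:
  fixes A :: "'a::field mat"
  assumes A: "A \<in> carrier_mat n n" and det: "det A \<noteq> 0"
  obtains Ai where "Ai \<in> carrier_mat n n" "A * Ai = 1\<^sub>m n" "Ai * A = 1\<^sub>m n"
proof -
  have "A \<in> Units (ring_mat TYPE('a) n ())" by (rule det_non_zero_imp_unit[OF A det])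
  then show ?thesis using that unfolding Units_def ring_mat_def by auto
qed

lemma submatrix_carrier_card:
  assumes "I \<subseteq> {..<dim_row M}" "J \<subseteq> {..<dim_col M}"
  shows "submatrix M I J \<in> carrier_mat (card I) (card J)"
proof -
  have "{i. i < dim_row M \<and> i \<in> I} = I" "{j. j < dim_col M \<and> j \<in> J} = J" using assms by auto
  then show ?thesis unfolding carrier_mat_def by (simp add: dim_submatrix)
qed

lemma transpose_submatrix_mult_vec:
  fixes M :: "'a::comm_semiring_0 mat"
  assumes I: "I \<subseteq> {..<dim_row M}" and J: "J \<subseteq> {..<dim_col M}" and card: "card J = card I"
    and b: "b < card I" and v: "v \<in> carrier_vec (card I)"
  shows "(transpose_mat (submatrix M I J) *\<^sub>v v) $ b = (\<Sum>k<card I. v $ k * M $$ (pick I k, pick J b))"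
proof -
  have A: "submatrix M I J \<in> carrier_mat (card I) (card I)"
    using submatrix_carrier_card[OF I J] card by simp
  have rows: "{i. i < dim_row M \<and> i \<in> I} = I" and cols: "{j. j < dim_col M \<and> j \<in> J} = J"
    using I J by auto
  have "(transpose_mat (submatrix M I J) *\<^sub>v v) $ b = (\<Sum>k<card I. submatrix M I J $$ (k, b) * v $ k)"
    using A b v by (simp add: scalar_prod_def atLeast0LessThan)
  also have "\<dots> = (\<Sum>k<card I. v $ k * M $$ (pick I k, pick J b))"
  proof (rule sum.cong[OF refl])
    fix k assume "k \<in> {..<card I}"
    then have "submatrix M I J $$ (k, b) = M $$ (pick I k, pick J b)"
      using submatrix_index[of k M I b J] b card by (simp add: rows cols)
    then show "submatrix M I J $$ (k, b) * v $ k = v $ k * M $$ (pick I k, pick J b)"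
      by (simp add: mult.commute)
  qed
  finally show ?thesis .
qed

lemma nonsingular_minor_left_kernel:
  fixes M :: "'a::field mat"
  assumes I: "I \<subseteq> {..<dim_row M}" and J: "J \<subseteq> {..<dim_col M}" and card: "card J = card I"
    and det: "det (submatrix M I J) \<noteq> 0"
    and comb: "\<forall>\<beta>\<in>J. (\<Sum>i\<in>I. l i * M $$ (i, \<beta>)) = 0"
  shows "\<forall>i\<in>I. l i = 0"
proof
  let ?n = "card I" and ?A = "transpose_mat (submatrix M I J)"
  have fin: "finite I" using I finite_subset by blast
  have A: "?A \<in> carrier_mat ?n ?n" using submatrix_carrier_card[OF I J] card by simp
  have detA: "det ?A \<noteq> 0"
    using det det_transpose[of "submatrix M I J" ?n] submatrix_carrier_card[OF I J] card by simp
  define v where "v = vec ?n (\<lambda>k. l (pick I k))"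
  have "?A *\<^sub>v v = 0\<^sub>v ?n"
  proof (rule eq_vecI)
    fix b assume "b < dim_vec (0\<^sub>v ?n)"
    then have b: "b < ?n" by simp
    then have "pick J b \<in> J" using card pick_in_set[of b J] by simp
    then have "(\<Sum>i\<in>I. l i * M $$ (i, pick J b)) = 0" using comb by blast
    then show "(?A *\<^sub>v v) $ b = 0\<^sub>v ?n $ b"
      using transpose_submatrix_mult_vec[OF I J card b] b
        sum_pick[OF fin, of "\<lambda>i. l i * M $$ (i, pick J b)"]
      by (simp add: v_def)
  qed (use A in simp)
  moreover have "v \<in> carrier_vec ?n" by (simp add: v_def)
  ultimately have v0: "v = 0\<^sub>v ?n"
    using det_0_iff_vec_prod_zero_field[OF A] detA by auto
  fix i assume i: "i \<in> I"
  have k: "card {a\<in>I. a < i} < ?n" using fin i by (intro psubset_card_mono) auto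
  have "l i = v $ card {a\<in>I. a < i}" using k pick_card_in_set[OF i] by (simp add: v_def)
  then show "l i = 0" using v0 k by simp
qed

lemma nonsingular_minor_left_solvable:
  fixes M :: "'a::field mat"
  assumes I: "I \<subseteq> {..<dim_row M}" and J: "J \<subseteq> {..<dim_col M}" and card: "card J = card I"
    and det: "det (submatrix M I J) \<noteq> 0"
  obtains l where "\<forall>\<beta>\<in>J. (\<Sum>i\<in>I. l i * M $$ (i, \<beta>)) = r \<beta>"
proof -
  let ?n = "card I" and ?A = "transpose_mat (submatrix M I J)"
  have fin: "finite I" using I finite_subset by blast
  have finJ: "finite J" using J finite_subset by blast
  have A: "?A \<in> carrier_mat ?n ?n" using submatrix_carrier_card[OF I J] card by simp
  have detA: "det ?A \<noteq> 0"
    using det det_transpose[of "submatrix M I J" ?n] submatrix_carrier_card[OF I J] card by simp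
  obtain Ai where Ai: "Ai \<in> carrier_mat ?n ?n" "?A * Ai = 1\<^sub>m ?n"
    using det_nonzero_obtain_inverse[OF A detA] by blast
  define r' where "r' = vec ?n (\<lambda>b. r (pick J b))"
  define v where "v = Ai *\<^sub>v r'"
  have v: "v \<in> carrier_vec ?n" using Ai by (simp add: v_def r'_def)
  have Av: "?A *\<^sub>v v = r'"
    using Ai A by (simp add: v_def r'_def assoc_mult_mat_vec[symmetric, of _ ?n ?n])
  define l where "l i = v $ card {a\<in>I. a < i}" for i
  have l_pick: "l (pick I k) = v $ k" if "k < ?n" for k
    using that card_pick[of k I] by (simp add: l_def)
  show ?thesis
  proof (rule that, intro ballI)
    fix \<beta> assume \<beta>: "\<beta> \<in> J"
    define b where "b = card {a\<in>J. a < \<beta>}"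
    have b: "b < ?n" using finJ \<beta> card unfolding b_def by (metis (no_types, lifting) mem_Collect_eq
      order_less_irrefl psubset_card_mono psubsetI subsetI)
    have pb: "pick J b = \<beta>" using pick_card_in_set[OF \<beta>] by (simp add: b_def)
    have "(\<Sum>i\<in>I. l i * M $$ (i, \<beta>)) = (\<Sum>k<?n. v $ k * M $$ (pick I k, pick J b))"
      using sum_pick[OF fin, of "\<lambda>i. l i * M $$ (i, \<beta>)"] l_pick pb by simp
    also have "\<dots> = r \<beta>"
      using transpose_submatrix_mult_vec[OF I J card b v] Av b pb by (simp add: r'_def)
    finally show "(\<Sum>i\<in>I. l i * M $$ (i, \<beta>)) = r \<beta>" .
  qed
qed

lemma nonsingular_minor_congruence_zero:
  fixes M :: "'a::field mat"
  assumes I: "I \<subseteq> {..<dim_row M}" and J: "J \<subseteq> {..<dim_col M}" and card: "card J = card I"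
    and det: "det (submatrix M I J) \<noteq> 0"
    and zero: "\<forall>\<alpha>\<in>J. \<forall>\<gamma>\<in>J. (\<Sum>s\<in>I. (\<Sum>t\<in>I. M $$ (t, \<alpha>) * D t s) * M $$ (s, \<gamma>)) = 0"
  shows "\<forall>t\<in>I. \<forall>s\<in>I. D t s = 0"
proof (intro ballI)
  fix t s assume t: "t \<in> I" and s: "s \<in> I"
  have "(\<Sum>t\<in>I. M $$ (t, \<alpha>) * D t s) = 0" if "\<alpha> \<in> J" for \<alpha>
    using nonsingular_minor_left_kernel[OF I J card det, where l = "\<lambda>s. \<Sum>t\<in>I. M $$ (t, \<alpha>) * D t s"]
      zero that s by blast
  then have "\<forall>\<alpha>\<in>J. (\<Sum>t\<in>I. D t s * M $$ (t, \<alpha>)) = 0"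
    by (simp add: mult.commute)
  then show "D t s = 0"
    using nonsingular_minor_left_kernel[OF I J card det, where l = "\<lambda>t. D t s"] t by blast
qed

definition all_minors_nonzero :: "'a::comm_ring_1 mat \<Rightarrow> bool" where
  "all_minors_nonzero M \<longleftrightarrow> (\<forall>I J. I \<subseteq> {..<dim_row M} \<longrightarrow> J \<subseteq> {..<dim_col M} \<longrightarrow>
     card I = card J \<longrightarrow> I \<noteq> {} \<longrightarrow> det (submatrix M I J) \<noteq> 0)"

lemma all_minors_nonzeroD:
  "all_minors_nonzero M \<Longrightarrow> I \<subseteq> {..<dim_row M} \<Longrightarrow> J \<subseteq> {..<dim_col M} \<Longrightarrow>
    card I = card J \<Longrightarrow> I \<noteq> {} \<Longrightarrow> det (submatrix M I J) \<noteq> 0"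
  unfolding all_minors_nonzero_def by blast

section \<open>Symmetric solutions supported on a graph\<close>

lemma double_sum_bilinear:
  fixes a b :: "'b \<Rightarrow> 'a::comm_semiring_0"
  shows "(\<Sum>s\<in>B. (\<Sum>t\<in>A. a t * S t s) * b s) = (\<Sum>t\<in>A. a t * (\<Sum>s\<in>B. S t s * b s))"
proof -
  have "(\<Sum>s\<in>B. (\<Sum>t\<in>A. a t * S t s) * b s) = (\<Sum>s\<in>B. \<Sum>t\<in>A. a t * (S t s * b s))"
    by (simp add: sum_distrib_right mult.assoc)
  also have "\<dots> = (\<Sum>t\<in>A. a t * (\<Sum>s\<in>B. S t s * b s))"
    by (subst sum.swap) (simp add: sum_distrib_left)
  finally show ?thesis .
qed

lemma left_solution_symmetric:
  fixes M :: "'a::field mat" and Q S :: "nat \<Rightarrow> nat \<Rightarrow> 'a"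
  assumes T: "T \<subseteq> {..<dim_row M}" and J: "J \<subseteq> {..<dim_col M}" and card: "card J = card T"
    and det: "det (submatrix M T J) \<noteq> 0"
    and S: "\<forall>t\<in>T. \<forall>\<beta>\<in>J. (\<Sum>s\<in>T. S t s * M $$ (s, \<beta>)) = Q t \<beta>"
    and compat: "\<forall>\<alpha>\<in>J. \<forall>\<beta>\<in>J. (\<Sum>t\<in>T. M $$ (t, \<alpha>) * Q t \<beta>) = (\<Sum>t\<in>T. M $$ (t, \<beta>) * Q t \<alpha>)"
  shows "\<forall>t\<in>T. \<forall>s\<in>T. S t s = S s t"
proof -
  have "\<forall>t\<in>T. \<forall>s\<in>T. S t s - S s t = 0"
  proof (rule nonsingular_minor_congruence_zero[OF T J card det], intro ballI)
    fix \<alpha> \<gamma> assume \<alpha>: "\<alpha> \<in> J" and \<gamma>: "\<gamma> \<in> J"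
    have "(\<Sum>s\<in>T. (\<Sum>t\<in>T. M $$ (t, \<alpha>) * S t s) * M $$ (s, \<gamma>)) = (\<Sum>t\<in>T. M $$ (t, \<alpha>) * Q t \<gamma>)"
      using S \<gamma> by (simp add: double_sum_bilinear)
    moreover have "(\<Sum>s\<in>T. (\<Sum>t\<in>T. M $$ (t, \<alpha>) * S s t) * M $$ (s, \<gamma>))
        = (\<Sum>s\<in>T. M $$ (s, \<gamma>) * (\<Sum>t\<in>T. S s t * M $$ (t, \<alpha>)))"
      by (intro sum.cong refl) (simp add: sum_distrib_left sum_distrib_right mult_ac)
    ultimately show "(\<Sum>s\<in>T. (\<Sum>t\<in>T. M $$ (t, \<alpha>) * (S t s - S s t)) * M $$ (s, \<gamma>)) = 0"
      using compat \<alpha> \<gamma> S by (simp add: right_diff_distrib left_diff_distrib sum_subtractf)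
  qed
  then show ?thesis by simp
qed

lemma symmetric_left_solution_extend:
  fixes M :: "'a::field mat" and Q S :: "nat \<Rightarrow> nat \<Rightarrow> 'a"
  assumes T: "T \<subseteq> {..<dim_row M}" and J: "J \<subseteq> {..<dim_col M}" and card: "card J = card T"
    and det: "det (submatrix M T J) \<noteq> 0"
    and sym: "\<forall>t\<in>T. \<forall>s\<in>T. S t s = S s t"
    and S: "\<forall>t\<in>T. \<forall>\<beta>\<in>J. (\<Sum>s\<in>T. S t s * M $$ (s, \<beta>)) = Q t \<beta>"
    and compat: "\<forall>\<alpha>\<in>J. (\<Sum>t\<in>T. M $$ (t, \<alpha>) * Q t \<gamma>) = (\<Sum>t\<in>T. M $$ (t, \<gamma>) * Q t \<alpha>)"
  shows "\<forall>t\<in>T. (\<Sum>s\<in>T. S t s * M $$ (s, \<gamma>)) = Q t \<gamma>"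
proof -
  define w where "w t = (\<Sum>s\<in>T. S t s * M $$ (s, \<gamma>)) - Q t \<gamma>" for t
  have "\<forall>\<alpha>\<in>J. (\<Sum>t\<in>T. w t * M $$ (t, \<alpha>)) = 0"
  proof
    fix \<alpha> assume \<alpha>: "\<alpha> \<in> J"
    have "(\<Sum>t\<in>T. (\<Sum>s\<in>T. S t s * M $$ (s, \<gamma>)) * M $$ (t, \<alpha>))
        = (\<Sum>t\<in>T. (\<Sum>s\<in>T. M $$ (s, \<gamma>) * S s t) * M $$ (t, \<alpha>))"
      using sym by (auto intro!: sum.cong simp: mult.commute)
    also have "\<dots> = (\<Sum>s\<in>T. M $$ (s, \<gamma>) * Q s \<alpha>)"
      using S \<alpha> by (simp add: double_sum_bilinear)
    also have "\<dots> = (\<Sum>t\<in>T. Q t \<gamma> * M $$ (t, \<alpha>))"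
      using compat \<alpha> by (simp add: mult.commute)
    finally show "(\<Sum>t\<in>T. w t * M $$ (t, \<alpha>)) = 0"
      by (simp add: w_def left_diff_distrib sum_subtractf)
  qed
  then have "\<forall>t\<in>T. w t = 0" by (rule nonsingular_minor_left_kernel[OF T J card det])
  then show ?thesis by (simp add: w_def)
qed

lemma symmetric_left_solution:
  fixes M :: "'a::field mat" and Q :: "nat \<Rightarrow> nat \<Rightarrow> 'a"
  assumes T: "T \<subseteq> {..<dim_row M}" and c: "1 \<le> c" "c \<le> dim_col M" and card: "card T = c - 1"
    and det: "det (submatrix M T {..<c - 1}) \<noteq> 0"
    and compat: "\<And>\<alpha> \<beta>. \<alpha> < c \<Longrightarrow> \<beta> < c \<Longrightarrow>
      (\<Sum>t\<in>T. M $$ (t, \<alpha>) * Q t \<beta>) = (\<Sum>t\<in>T. M $$ (t, \<beta>) * Q t \<alpha>)"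
  obtains S where "\<forall>i j. S i j = S j i"
    and "\<forall>t\<in>T. \<forall>\<beta><c. (\<Sum>s\<in>T. S t s * M $$ (s, \<beta>)) = Q t \<beta>"
proof -
  let ?J = "{..<c - 1}"
  have J: "?J \<subseteq> {..<dim_col M}" and cardJ: "card ?J = card T" using c card by auto
  have "\<forall>t. \<exists>l. \<forall>\<beta>\<in>?J. (\<Sum>s\<in>T. l s * M $$ (s, \<beta>)) = Q t \<beta>"
    using nonsingular_minor_left_solvable[OF T J cardJ det] by metis
  then obtain S0 where S0: "\<forall>t\<in>T. \<forall>\<beta>\<in>?J. (\<Sum>s\<in>T. S0 t s * M $$ (s, \<beta>)) = Q t \<beta>"
    by metis
  have S0_sym: "\<forall>t\<in>T. \<forall>s\<in>T. S0 t s = S0 s t"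
    using left_solution_symmetric[OF T J cardJ det S0] compat c by auto
  have S0_last: "\<forall>t\<in>T. (\<Sum>s\<in>T. S0 t s * M $$ (s, c - 1)) = Q t (c - 1)"
    using symmetric_left_solution_extend[OF T J cardJ det S0_sym S0] compat c by auto
  define S where "S i j = (if i \<in> T \<and> j \<in> T then S0 i j else 0)" for i j
  have "\<beta> < c - 1 \<or> \<beta> = c - 1" if "\<beta> < c" for \<beta> using that by linarith
  then have "\<forall>t\<in>T. \<forall>\<beta><c. (\<Sum>s\<in>T. S t s * M $$ (s, \<beta>)) = Q t \<beta>"
    using S0 S0_last by (auto simp: S_def)
  moreover have "\<forall>i j. S i j = S j i" using S0_sym by (simp add: S_def)
  ultimately show ?thesis using that by blast
qed

lemma bilinear_form_swap:
  assumes "\<forall>i\<in>A. \<forall>j\<in>A. B i j = B j i"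
  shows "(\<Sum>i\<in>A. \<Sum>j\<in>A. m i \<alpha> * B i j * m j \<beta>) = (\<Sum>i\<in>A. \<Sum>j\<in>A. m i \<beta> * B i j * m j (\<alpha>::'b) :: 'a::comm_semiring_0)"
proof -
  have "(\<Sum>i\<in>A. \<Sum>j\<in>A. m i \<alpha> * B i j * m j \<beta>) = (\<Sum>j\<in>A. \<Sum>i\<in>A. m i \<alpha> * B i j * m j \<beta>)"
    by (rule sum.swap)
  also have "\<dots> = (\<Sum>j\<in>A. \<Sum>i\<in>A. m j \<beta> * B j i * m i \<alpha>)"
    using assms by (intro sum.cong refl) (simp add: mult_ac)
  finally show ?thesis .
qed

text \<open>With \<open>R = B\<^sub>0 M\<close> on all rows and \<open>R = B M\<close> on the rows in \<open>P\<close>, the residual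
  \<open>Q = R - B M\<^sub>P\<close> on \<open>T\<close> satisfies \<open>M\<^sub>T\<^sup>T Q = M\<^sup>T B\<^sub>0 M - (M\<^sup>T B M - M\<^sub>T\<^sup>T B M\<^sub>T)\<close>,
  a symmetric matrix.\<close>

lemma tail_residual_compatible:
  fixes M :: "'a::comm_ring mat" and R B0 B :: "nat \<Rightarrow> nat \<Rightarrow> 'a"
  assumes PT: "P \<inter> T = {}" "P \<union> T = {..<N}"
    and B0_sym: "\<forall>i<N. \<forall>j<N. B0 i j = B0 j i"
    and R: "\<forall>i<N. \<forall>\<beta><c. R i \<beta> = (\<Sum>j<N. B0 i j * M $$ (j, \<beta>))"
    and B_sym: "\<forall>i j. B i j = B j i"
    and B_eq: "\<forall>i\<in>P. \<forall>\<beta><c. (\<Sum>j<N. B i j * M $$ (j, \<beta>)) = R i \<beta>"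
    and \<alpha>\<beta>: "\<alpha> < c" "\<beta> < c"
  shows "(\<Sum>t\<in>T. M $$ (t, \<alpha>) * (R t \<beta> - (\<Sum>j\<in>P. B t j * M $$ (j, \<beta>))))
       = (\<Sum>t\<in>T. M $$ (t, \<beta>) * (R t \<alpha> - (\<Sum>j\<in>P. B t j * M $$ (j, \<alpha>))))"
proof -
  let ?U = "P \<union> T" and ?m = "\<lambda>j \<gamma>. M $$ (j, \<gamma>)"
  have "finite ?U" unfolding PT(2) by simp
  then have fin: "finite P" "finite T" by auto
  have R_B0: "R i b = (\<Sum>j\<in>?U. B0 i j * ?m j b)" if "i \<in> ?U" "b \<in> {\<alpha>, \<beta>}" for i b
    using R that \<alpha>\<beta> unfolding PT(2) by auto
  have R_B: "R i b = (\<Sum>j\<in>?U. B i j * ?m j b)" if "i \<in> P" "b \<in> {\<alpha>, \<beta>}" for i b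
    using B_eq that \<alpha>\<beta> unfolding PT(2) by auto
  define F where "F a b = (\<Sum>i\<in>?U. \<Sum>j\<in>?U. ?m i a * B0 i j * ?m j b)" for a b
  define G where "G a b = (\<Sum>i\<in>P. \<Sum>j\<in>P. ?m i a * B i j * ?m j b)" for a b
  define H where "H a b = (\<Sum>i\<in>P. \<Sum>j\<in>T. ?m i a * B i j * ?m j b)" for a b
  define H' where "H' a b = (\<Sum>t\<in>T. \<Sum>j\<in>P. ?m t a * B t j * ?m j b)" for a b
  have F_sym: "F a b = F b a" for a b
    unfolding F_def by (rule bilinear_form_swap) (use B0_sym in \<open>auto simp: PT(2)\<close>)
  have G_sym: "G a b = G b a" for a b unfolding G_def by (rule bilinear_form_swap) (use B_sym in auto)
  have H_swap: "H b a = H' a b" for a b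
  proof -
    have "H b a = (\<Sum>j\<in>T. \<Sum>i\<in>P. ?m i b * B i j * ?m j a)" unfolding H_def by (rule sum.swap)
    also have "\<dots> = H' a b" unfolding H'_def using B_sym by (intro sum.cong refl) (simp add: mult_ac)
    finally show ?thesis .
  qed
  have split: "(\<Sum>t\<in>T. ?m t a * (R t b - (\<Sum>j\<in>P. B t j * ?m j b))) = F a b - G a b - H a b - H' a b"
    if b: "b \<in> {\<alpha>, \<beta>}" for a b
  proof -
    have "(\<Sum>i\<in>?U. ?m i a * R i b) = F a b"
      unfolding F_def using R_B0 b by (intro sum.cong refl) (simp add: sum_distrib_left mult_ac)
    moreover have "(\<Sum>i\<in>P. ?m i a * R i b) = G a b + H a b"
    proof -
      have "?m i a * R i b = (\<Sum>j\<in>P. ?m i a * B i j * ?m j b) + (\<Sum>j\<in>T. ?m i a * B i j * ?m j b)"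
        if i: "i \<in> P" for i
        using R_B[OF i b] sum.union_disjoint[OF fin PT(1), of "\<lambda>j. ?m i a * B i j * ?m j b"]
        by (simp add: sum_distrib_left mult_ac)
      then show ?thesis unfolding G_def H_def by (simp add: sum.distrib)
    qed
    moreover have "(\<Sum>i\<in>?U. ?m i a * R i b) = (\<Sum>i\<in>P. ?m i a * R i b) + (\<Sum>i\<in>T. ?m i a * R i b)"
      by (rule sum.union_disjoint[OF fin PT(1)])
    moreover have "(\<Sum>t\<in>T. ?m t a * (R t b - (\<Sum>j\<in>P. B t j * ?m j b)))
        = (\<Sum>t\<in>T. ?m t a * R t b) - H' a b"
      by (simp add: H'_def right_diff_distrib sum_subtractf sum_distrib_left mult_ac)
    ultimately show ?thesis by (simp add: algebra_simps)
  qed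
  show ?thesis using split[of \<beta> \<alpha>] split[of \<alpha> \<beta>] F_sym G_sym H_swap by simp
qed

lemma symmetric_row_update:
  fixes M :: "'a::field mat" and B :: "nat \<Rightarrow> nat \<Rightarrow> 'a"
  assumes sym: "\<forall>i j. B i j = B j i"
    and S: "S \<subseteq> {..<dim_row M}" and P: "P \<subseteq> {..<dim_row M}" and disj: "P \<inter> S = {}"
    and v: "v \<in> S" and card: "card S = dim_col M"
    and det: "det (submatrix M S {..<dim_col M}) \<noteq> 0"
  obtains B' where "\<forall>i j. B' i j = B' j i" and "\<forall>i\<in>P. \<forall>j. B' i j = B i j"
    and "\<forall>j. j \<notin> S \<longrightarrow> j \<notin> P \<longrightarrow> B' v j = 0"
    and "\<forall>\<beta><dim_col M. (\<Sum>j<dim_row M. B' v j * M $$ (j, \<beta>)) = r \<beta>"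
proof -
  let ?N = "dim_row M" and ?c = "dim_col M"
  have finS: "finite S" and finP: "finite P" using S P finite_subset by auto
  obtain l where l: "\<forall>\<beta>\<in>{..<?c}. (\<Sum>j\<in>S. l j * M $$ (j, \<beta>)) = r \<beta> - (\<Sum>j\<in>P. B v j * M $$ (j, \<beta>))"
    using nonsingular_minor_left_solvable[OF S _ _ det, where r = "\<lambda>\<beta>. r \<beta> - (\<Sum>j\<in>P. B v j * M $$ (j, \<beta>))"]
      card by auto
  define row where "row j = (if j \<in> S then l j else if j \<in> P then B v j else 0)" for j
  define B' where "B' i j = (if i = v then row j else if j = v then row i else B i j)" for i j
  have vP: "v \<notin> P" using v disj by auto
  have B'_row: "B' v j = row j" for j by (simp add: B'_def)
  show ?thesis
  proof (rule that)
    show "\<forall>i j. B' i j = B' j i" using sym by (simp add: B'_def)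
    show "\<forall>i\<in>P. \<forall>j. B' i j = B i j" using vP disj sym by (auto simp: B'_def row_def)
    show "\<forall>j. j \<notin> S \<longrightarrow> j \<notin> P \<longrightarrow> B' v j = 0" by (simp add: B'_def row_def)
    show "\<forall>\<beta><?c. (\<Sum>j<?N. B' v j * M $$ (j, \<beta>)) = r \<beta>"
    proof (intro allI impI)
      fix \<beta> assume \<beta>: "\<beta> < ?c"
      have "(\<Sum>j<?N. B' v j * M $$ (j, \<beta>)) = (\<Sum>j\<in>S \<union> P. row j * M $$ (j, \<beta>))"
        unfolding B'_row by (rule sum.mono_neutral_right) (use S P in \<open>auto simp: row_def\<close>)
      also have "\<dots> = (\<Sum>j\<in>S. row j * M $$ (j, \<beta>)) + (\<Sum>j\<in>P. row j * M $$ (j, \<beta>))"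
        using disj by (intro sum.union_disjoint finS finP) auto
      also have "\<dots> = (\<Sum>j\<in>S. l j * M $$ (j, \<beta>)) + (\<Sum>j\<in>P. B v j * M $$ (j, \<beta>))"
        using disj by (auto simp: row_def intro!: sum.cong)
      also have "\<dots> = r \<beta>" using l \<beta> by simp
      finally show "(\<Sum>j<?N. B' v j * M $$ (j, \<beta>)) = r \<beta>" .
    qed
  qed
qed

definition later_nbrs :: "(nat \<Rightarrow> nat \<Rightarrow> bool) \<Rightarrow> (nat \<Rightarrow> nat) \<Rightarrow> nat \<Rightarrow> nat \<Rightarrow> nat set" where
  "later_nbrs E q N a = {b. a < b \<and> b < N \<and> E (q a) (q b)}"

lemma later_nbrs_full:
  assumes card: "card (later_nbrs E q N a) = N - Suc a" and b: "a < b" "b < N"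
  shows "E (q a) (q b)"
proof -
  have sub: "later_nbrs E q N a \<subseteq> {a<..<N}" unfolding later_nbrs_def by auto
  have "card (later_nbrs E q N a) = card {a<..<N}" unfolding card by simp
  then have "later_nbrs E q N a = {a<..<N}" using card_subset_eq[OF _ sub] by simp
  then have "b \<in> later_nbrs E q N a" using b by simp
  then show ?thesis by (simp add: later_nbrs_def)
qed

lemma clique_of_later_nbrs_full:
  assumes q: "bij_betw q {..<N} {..<N}" and E_sym: "\<forall>i<N. \<forall>j<N. E i j = E j i"
    and full: "\<forall>a. K \<le> a \<longrightarrow> a < N \<longrightarrow> card (later_nbrs E q N a) = N - Suc a"
    and ij: "i \<in> q ` {K..<N}" "j \<in> q ` {K..<N}" "i \<noteq> j"
  shows "E i j"
proof -
  obtain a b where ab: "K \<le> a" "a < N" "K \<le> b" "b < N" "i = q a" "j = q b"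
    using ij(1,2) by auto
  have "q a < N" "q b < N" using q ab by (auto simp: bij_betw_def)
  moreover have "a \<noteq> b" using ab ij(3) by auto
  then have "a < b \<or> b < a" by linarith
  ultimately show ?thesis
    using later_nbrs_full[of E q N a b] later_nbrs_full[of E q N b a] full ab E_sym by auto
qed

lemma bij_betw_image_split:
  assumes q: "bij_betw q {..<N} {..<N}" and K: "K \<le> N"
  shows "q ` {..<K} \<inter> q ` {K..<N} = {}" and "q ` {..<K} \<union> q ` {K..<N} = {..<N}"
    and "card (q ` {K..<N}) = N - K"
proof -
  have q_inj: "inj_on q {..<N}" and q_img: "q ` {..<N} = {..<N}" using q by (auto simp: bij_betw_def)
  have "q ` {..<K} \<inter> q ` {K..<N} = q ` ({..<K} \<inter> {K..<N})"
    by (rule inj_on_image_Int[OF q_inj, symmetric]) (use K in auto)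
  then show "q ` {..<K} \<inter> q ` {K..<N} = {}" by auto
  have "{..<K} \<union> {K..<N} = {..<N}" using K by auto
  then show "q ` {..<K} \<union> q ` {K..<N} = {..<N}" using q_img by (metis image_Un)
  have "{K..<N} \<subseteq> {..<N}" by auto
  then show "card (q ` {K..<N}) = N - K" using card_image[OF inj_on_subset[OF q_inj]] by simp
qed

lemma later_nbrs_star:
  assumes q: "bij_betw q {..<N} {..<N}" and k: "k < N"
  shows "insert (q k) (q ` later_nbrs E q N k) \<subseteq> {..<N}"
    and "card (insert (q k) (q ` later_nbrs E q N k)) = Suc (card (later_nbrs E q N k))"
    and "q ` {..<k} \<inter> insert (q k) (q ` later_nbrs E q N k) = {}"
proof -
  have q_inj: "inj_on q {..<N}" and q_lt: "\<And>a. a < N \<Longrightarrow> q a < N"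
    using q by (auto simp: bij_betw_def)
  have q_eq: "a = b" if "q a = q b" "a < N" "b < N" for a b using inj_onD[OF q_inj that(1)] that by simp
  have later: "later_nbrs E q N k \<subseteq> {..<N}" by (auto simp: later_nbrs_def)
  show "insert (q k) (q ` later_nbrs E q N k) \<subseteq> {..<N}" using later q_lt k by auto
  have "q k \<notin> q ` later_nbrs E q N k" using q_eq k by (auto simp: later_nbrs_def)
  then show "card (insert (q k) (q ` later_nbrs E q N k)) = Suc (card (later_nbrs E q N k))"
    using card_image[OF inj_on_subset[OF q_inj later]] by (simp add: later_nbrs_def)
  show "q ` {..<k} \<inter> insert (q k) (q ` later_nbrs E q N k) = {}"
    using q_eq k by (fastforce simp: later_nbrs_def)
qed

lemma greedy_sparse_rows:
  fixes M :: "'a::field mat" and R :: "nat \<Rightarrow> nat \<Rightarrow> 'a"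
  assumes dims: "dim_row M = N" "dim_col M = c" and c: "1 \<le> c"
    and q: "bij_betw q {..<N} {..<N}" and E_sym: "\<forall>i<N. \<forall>j<N. E i j = E j i"
    and deg: "\<And>a. a < k \<Longrightarrow> card (later_nbrs E q N a) = c - 1"
    and minors: "all_minors_nonzero M" and k: "k \<le> N"
  shows "\<exists>B. (\<forall>i j. B i j = B j i)
    \<and> (\<forall>a<k. \<forall>j<N. j \<noteq> q a \<and> \<not> E (q a) j \<longrightarrow> B (q a) j = 0)
    \<and> (\<forall>a<k. \<forall>\<beta><c. (\<Sum>j<N. B (q a) j * M $$ (j, \<beta>)) = R (q a) \<beta>)"
  using deg k
proof (induction k)
  case 0
  show ?case by (rule exI[of _ "\<lambda>_ _. 0"]) simp
next
  case (Suc k)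
  then obtain B where B_sym: "\<forall>i j. B i j = B j i"
    and B_zero: "\<forall>a<k. \<forall>j<N. j \<noteq> q a \<and> \<not> E (q a) j \<longrightarrow> B (q a) j = 0"
    and B_eq: "\<forall>a<k. \<forall>\<beta><c. (\<Sum>j<N. B (q a) j * M $$ (j, \<beta>)) = R (q a) \<beta>" by auto
  have kN: "k < N" using Suc.prems by simp
  have q_lt: "\<And>a. a < N \<Longrightarrow> q a < N" using q by (auto simp: bij_betw_def)
  define v where "v = q k"
  define S where "S = insert v (q ` later_nbrs E q N k)"
  define P where "P = q ` {..<k}"
  have S: "S \<subseteq> {..<N}" "card S = c" and P: "P \<subseteq> {..<N}" "P \<inter> S = {}"
    using later_nbrs_star[OF q kN, of E] Suc.prems c q_lt kN unfolding S_def P_def v_def by auto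
  have "det (submatrix M S {..<c}) \<noteq> 0"
    using all_minors_nonzeroD[OF minors, of S "{..<c}"] S dims by (auto simp: S_def)
  then obtain B' where B'_sym: "\<forall>i j. B' i j = B' j i" and B'_P: "\<forall>i\<in>P. \<forall>j. B' i j = B i j"
    and B'_zero: "\<forall>j. j \<notin> S \<longrightarrow> j \<notin> P \<longrightarrow> B' v j = 0"
    and B'_eq: "\<forall>\<beta><c. (\<Sum>j<N. B' v j * M $$ (j, \<beta>)) = R v \<beta>"
    using symmetric_row_update[OF B_sym, of S M P v "R v"] S P dims by (auto simp: S_def)
  have old: "B' (q a) j = B (q a) j" if "a < k" for a j using B'_P that by (auto simp: P_def)
  have new_zero: "B' v j = 0" if j: "j < N" "j \<noteq> v" "\<not> E v j" for j
  proof (cases "j \<in> P")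
    case True
    then obtain b where b: "b < k" "j = q b" by (auto simp: P_def)
    have "\<not> E (q b) v" using E_sym j q_lt kN b by (auto simp: v_def)
    then have "B (q b) v = 0" using B_zero b j q_lt kN by (auto simp: v_def)
    then show ?thesis using B'_sym old[OF b(1)] b by metis
  next
    case False
    have "j \<notin> S" using j by (auto simp: S_def v_def later_nbrs_def)
    then show ?thesis using B'_zero False by blast
  qed
  show ?case
  proof (intro exI conjI allI impI)
    show "B' i j = B' j i" for i j using B'_sym by blast
  next
    fix a j assume "a < Suc k" "j < N" "j \<noteq> q a \<and> \<not> E (q a) j"
    then show "B' (q a) j = 0"
      using old B_zero new_zero by (cases "a < k") (auto simp: v_def less_Suc_eq)
  next
    fix a \<beta> assume "a < Suc k" "\<beta> < c"
    then show "(\<Sum>j<N. B' (q a) j * M $$ (j, \<beta>)) = R (q a) \<beta>"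
      using old B_eq B'_eq by (cases "a < k") (auto simp: v_def less_Suc_eq)
  qed
qed

lemma symmetric_tail_completion:
  fixes M :: "'a::field mat" and R B0 B :: "nat \<Rightarrow> nat \<Rightarrow> 'a"
  assumes dims: "dim_row M = N" "dim_col M = c" and c: "1 \<le> c"
    and PT: "P \<inter> T = {}" "P \<union> T = {..<N}" and card_T: "card T = c - 1"
    and det: "det (submatrix M T {..<c - 1}) \<noteq> 0"
    and B0_sym: "\<forall>i<N. \<forall>j<N. B0 i j = B0 j i"
    and R: "\<forall>i<N. \<forall>\<beta><c. R i \<beta> = (\<Sum>j<N. B0 i j * M $$ (j, \<beta>))"
    and B_sym: "\<forall>i j. B i j = B j i"
    and B_eq: "\<forall>i\<in>P. \<forall>\<beta><c. (\<Sum>j<N. B i j * M $$ (j, \<beta>)) = R i \<beta>"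
  obtains B' where "\<forall>i j. B' i j = B' j i" and "\<forall>i j. i \<notin> T \<or> j \<notin> T \<longrightarrow> B' i j = B i j"
    and "\<forall>i<N. \<forall>\<beta><c. (\<Sum>j<N. B' i j * M $$ (j, \<beta>)) = R i \<beta>"
proof -
  have "finite (P \<union> T)" unfolding PT(2) by simp
  then have fin: "finite P" "finite T" by auto
  have T_M: "T \<subseteq> {..<dim_row M}" using PT dims by auto
  define Q where "Q i \<beta> = R i \<beta> - (\<Sum>j\<in>P. B i j * M $$ (j, \<beta>))" for i \<beta>
  have compat: "(\<Sum>t\<in>T. M $$ (t, \<alpha>) * Q t \<beta>) = (\<Sum>t\<in>T. M $$ (t, \<beta>) * Q t \<alpha>)"
    if "\<alpha> < c" "\<beta> < c" for \<alpha> \<beta>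
    unfolding Q_def by (rule tail_residual_compatible[OF PT B0_sym R B_sym B_eq that])
  obtain S where S_sym: "\<forall>i j. S i j = S j i"
    and S_eq: "\<forall>t\<in>T. \<forall>\<beta><c. (\<Sum>s\<in>T. S t s * M $$ (s, \<beta>)) = Q t \<beta>"
    using symmetric_left_solution[OF T_M c _ card_T det compat] dims by auto
  define B' where "B' i j = (if i \<in> T \<and> j \<in> T then S i j else B i j)" for i j
  show ?thesis
  proof (rule that)
    show "\<forall>i j. B' i j = B' j i" using S_sym B_sym by (simp add: B'_def)
    show "\<forall>i j. i \<notin> T \<or> j \<notin> T \<longrightarrow> B' i j = B i j" by (auto simp: B'_def)
    show "\<forall>i<N. \<forall>\<beta><c. (\<Sum>j<N. B' i j * M $$ (j, \<beta>)) = R i \<beta>"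
    proof (intro allI impI)
      fix i \<beta> assume i: "i < N" and \<beta>: "\<beta> < c"
      show "(\<Sum>j<N. B' i j * M $$ (j, \<beta>)) = R i \<beta>"
      proof (cases "i \<in> T")
        case False
        then have "i \<in> P" using i PT(2) by auto
        then show ?thesis using B_eq \<beta> False by (simp add: B'_def)
      next
        case True
        have "(\<Sum>j<N. B' i j * M $$ (j, \<beta>))
            = (\<Sum>j\<in>P. B' i j * M $$ (j, \<beta>)) + (\<Sum>j\<in>T. B' i j * M $$ (j, \<beta>))"
          unfolding PT(2)[symmetric] by (rule sum.union_disjoint[OF fin PT(1)])
        also have "(\<Sum>j\<in>P. B' i j * M $$ (j, \<beta>)) = (\<Sum>j\<in>P. B i j * M $$ (j, \<beta>))"
          using PT(1) by (intro sum.cong refl) (auto simp: B'_def)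
        also have "(\<Sum>j\<in>T. B' i j * M $$ (j, \<beta>)) = Q i \<beta>"
          using True S_eq \<beta> by (simp add: B'_def)
        finally show ?thesis by (simp add: Q_def)
      qed
    qed
  qed
qed

lemma sparse_symmetric_solution:
  fixes M :: "'a::field mat" and R B0 :: "nat \<Rightarrow> nat \<Rightarrow> 'a"
  assumes dims: "dim_row M = N" "dim_col M = c" and c: "2 \<le> c" "c < N"
    and q: "bij_betw q {..<N} {..<N}" and E_sym: "\<forall>i<N. \<forall>j<N. E i j = E j i"
    and deg: "\<forall>a<N. card (later_nbrs E q N a) = min (c - 1) (N - Suc a)"
    and minors: "all_minors_nonzero M"
    and B0_sym: "\<forall>i<N. \<forall>j<N. B0 i j = B0 j i"
    and R: "\<forall>i<N. \<forall>\<beta><c. R i \<beta> = (\<Sum>j<N. B0 i j * M $$ (j, \<beta>))"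
  obtains B where "\<forall>i j. B i j = B j i" and "\<forall>i<N. \<forall>j<N. i \<noteq> j \<and> \<not> E i j \<longrightarrow> B i j = 0"
    and "\<forall>i<N. \<forall>\<beta><c. (\<Sum>j<N. B i j * M $$ (j, \<beta>)) = R i \<beta>"
proof -
  define K where "K = N - c + 1"
  have c1: "1 \<le> c" using c by simp
  have K: "K \<le> N" using c by (simp add: K_def)
  have "card (later_nbrs E q N a) = c - 1" if "a < K" for a
    using deg that c by (simp add: K_def)
  then obtain B1 where B1_sym: "\<forall>i j. B1 i j = B1 j i"
    and B1_zero: "\<forall>a<K. \<forall>j<N. j \<noteq> q a \<and> \<not> E (q a) j \<longrightarrow> B1 (q a) j = 0"
    and B1_eq: "\<forall>a<K. \<forall>\<beta><c. (\<Sum>j<N. B1 (q a) j * M $$ (j, \<beta>)) = R (q a) \<beta>"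
    using greedy_sparse_rows[OF dims _ q E_sym _ minors K, of R] c by auto
  define P where "P = q ` {..<K}"
  define T where "T = q ` {K..<N}"
  have PT: "P \<inter> T = {}" "P \<union> T = {..<N}" and card_T: "card T = c - 1"
    using bij_betw_image_split[OF q K] c unfolding P_def T_def K_def by auto
  have "T \<subseteq> {..<dim_row M}" using PT(2) dims(1) by auto
  moreover have "{..<c - 1} \<subseteq> {..<dim_col M}" using dims(2) by auto
  moreover have "card T = card {..<c - 1}" using card_T by simp
  moreover have "T \<noteq> {}" using card_T c by auto
  ultimately have det: "det (submatrix M T {..<c - 1}) \<noteq> 0" by (rule all_minors_nonzeroD[OF minors])
  have B1_P: "\<forall>i\<in>P. \<forall>\<beta><c. (\<Sum>j<N. B1 i j * M $$ (j, \<beta>)) = R i \<beta>"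
    unfolding P_def using B1_eq by blast
  obtain B where B_sym: "\<forall>i j. B i j = B j i" and B_T: "\<forall>i j. i \<notin> T \<or> j \<notin> T \<longrightarrow> B i j = B1 i j"
    and B_eq: "\<forall>i<N. \<forall>\<beta><c. (\<Sum>j<N. B i j * M $$ (j, \<beta>)) = R i \<beta>"
    using symmetric_tail_completion[OF dims c1 PT card_T det B0_sym R B1_sym B1_P] by blast
  have "\<forall>a. K \<le> a \<longrightarrow> a < N \<longrightarrow> card (later_nbrs E q N a) = N - Suc a"
    using deg c by (auto simp: K_def)
  then have T_clique: "E i j" if "i \<in> T" "j \<in> T" "i \<noteq> j" for i j
    using clique_of_later_nbrs_full[OF q E_sym] that unfolding T_def by blast
  show ?thesis
  proof (rule that[OF B_sym _ B_eq], intro allI impI)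
    fix i j assume i: "i < N" and j: "j < N" and ij: "i \<noteq> j \<and> \<not> E i j"
    then have "i \<notin> T \<or> j \<notin> T" using T_clique by blast
    then have B_B1: "B i j = B1 i j" and "i \<in> P \<or> j \<in> P" using B_T PT i j by auto
    moreover have "B1 i j = 0" if "i \<in> P" using that B1_zero j ij by (auto simp: P_def)
    moreover have "B1 i j = 0" if "j \<in> P"
      using that B1_zero B1_sym i ij E_sym j by (auto simp: P_def)
    ultimately show "B i j = 0" by auto
  qed
qed

section \<open>The Cayley transform and its linearisation\<close>

lemma dim_mat_adjoint [simp]:
  "dim_row (mat_adjoint A) = dim_col A" "dim_col (mat_adjoint A) = dim_row A"
  unfolding mat_adjoint_def by auto

lemma index_mat_adjoint [simp]:
  fixes A :: "complex mat"
  shows "i < dim_col A \<Longrightarrow> j < dim_row A \<Longrightarrow> mat_adjoint A $$ (i, j) = cnj (A $$ (j, i))"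
  unfolding mat_adjoint_def by (simp add: mat_of_rows_index)

lemma mat_adjoint_carrier: "A \<in> carrier_mat a b \<Longrightarrow> mat_adjoint A \<in> carrier_mat b a"
  unfolding carrier_mat_def by simp

lemma mat_adjoint_mult:
  fixes A C :: "complex mat"
  assumes A: "A \<in> carrier_mat a b" and C: "C \<in> carrier_mat b d"
  shows "mat_adjoint (A * C) = mat_adjoint C * mat_adjoint A"
proof (rule eq_matI)
  fix i j assume "i < dim_row (mat_adjoint C * mat_adjoint A)" "j < dim_col (mat_adjoint C * mat_adjoint A)"
  then have i: "i < d" and j: "j < a" using A C by auto
  have "mat_adjoint (A * C) $$ (i, j) = cnj (\<Sum>k<b. A $$ (j, k) * C $$ (k, i))"
    using A C i j by (simp add: index_mult_mat_sum[OF A C j i])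
  also have "\<dots> = (\<Sum>k<b. mat_adjoint C $$ (i, k) * mat_adjoint A $$ (k, j))"
    unfolding cnj_sum using A C i j by (intro sum.cong refl) (simp add: mult.commute)
  also have "\<dots> = (mat_adjoint C * mat_adjoint A) $$ (i, j)"
    using index_mult_mat_sum[OF mat_adjoint_carrier[OF C] mat_adjoint_carrier[OF A] i j] by simp
  finally show "mat_adjoint (A * C) $$ (i, j) = (mat_adjoint C * mat_adjoint A) $$ (i, j)" .
qed (use A C in auto)

lemma symmetric_mat_index:
  "B \<in> carrier_mat n n \<Longrightarrow> B = transpose_mat B \<Longrightarrow> i < n \<Longrightarrow> j < n \<Longrightarrow> B $$ (i, j) = B $$ (j, i)"
  by (metis carrier_matD index_transpose_mat(1))

definition imag_mat :: "real \<Rightarrow> real mat \<Rightarrow> complex mat" where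
  "imag_mat Z B = (\<i> * complex_of_real Z) \<cdot>\<^sub>m map_mat complex_of_real B"

lemma imag_mat_carrier: "B \<in> carrier_mat n n \<Longrightarrow> imag_mat Z B \<in> carrier_mat n n"
  by (simp add: imag_mat_def)

lemma index_imag_mat:
  "B \<in> carrier_mat n n \<Longrightarrow> i < n \<Longrightarrow> j < n \<Longrightarrow>
    imag_mat Z B $$ (i, j) = \<i> * complex_of_real Z * complex_of_real (B $$ (i, j))"
  by (simp add: imag_mat_def)

lemma theta_imag_mat:
  "B \<in> carrier_mat n n \<Longrightarrow>
    theta Z B = the (mat_inverse (1\<^sub>m n + imag_mat Z B)) * (1\<^sub>m n - imag_mat Z B)"
  by (simp add: theta_def imag_mat_def Let_def)

text \<open>For real symmetric \<open>B\<close> the form \<open>v\<^sup>H B v\<close> is real, so \<open>v = \<i> Z B v\<close> forces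
  \<open>\<parallel>v\<parallel>\<^sup>2 = \<i> Z v\<^sup>H B v\<close> to be both real and imaginary.\<close>

lemma imag_sym_fixed_point_zero:
  fixes B :: "nat \<Rightarrow> nat \<Rightarrow> real" and v :: "nat \<Rightarrow> complex"
  assumes sym: "\<forall>i<n. \<forall>j<n. B i j = B j i"
    and fixed: "\<forall>i<n. v i = \<i> * complex_of_real Z * (\<Sum>j<n. complex_of_real (B i j) * v j)"
  shows "\<forall>i<n. v i = 0"
proof -
  define s where "s = (\<Sum>i<n. \<Sum>j<n. cnj (v i) * complex_of_real (B i j) * v j)"
  have "cnj s = (\<Sum>i<n. \<Sum>j<n. v i * complex_of_real (B i j) * cnj (v j))"
    unfolding s_def by simp
  also have "\<dots> = (\<Sum>j<n. \<Sum>i<n. v i * complex_of_real (B i j) * cnj (v j))"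
    by (rule sum.swap)
  also have "\<dots> = s"
    unfolding s_def using sym by (intro sum.cong refl) (simp add: mult_ac)
  finally have "Im (cnj s) = Im s" by simp
  then have "Im s = 0" by simp
  have "(\<Sum>i<n. cnj (v i) * v i) = (\<Sum>i<n. cnj (v i) * (\<i> * complex_of_real Z * (\<Sum>j<n. complex_of_real (B i j) * v j)))"
  proof (rule sum.cong[OF refl])
    fix i assume "i \<in> {..<n}"
    then have "v i = \<i> * complex_of_real Z * (\<Sum>j<n. complex_of_real (B i j) * v j)"
      using fixed by blast
    then show "cnj (v i) * v i = cnj (v i) * (\<i> * complex_of_real Z * (\<Sum>j<n. complex_of_real (B i j) * v j))"
      by (rule arg_cong)
  qed
  also have "\<dots> = (\<Sum>i<n. \<i> * complex_of_real Z * (\<Sum>j<n. cnj (v i) * complex_of_real (B i j) * v j))"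
    by (intro sum.cong refl) (simp add: sum_distrib_left mult.assoc mult.left_commute)
  also have "\<dots> = \<i> * complex_of_real Z * s"
    unfolding s_def by (rule sum_distrib_left[symmetric])
  finally have "Re (\<Sum>i<n. cnj (v i) * v i) = 0" using \<open>Im s = 0\<close> by simp
  moreover have "Re (cnj x * x) = (cmod x)\<^sup>2" for x
    by (subst cmod_power2) (simp add: power2_eq_square)
  then have "Re (\<Sum>i<n. cnj (v i) * v i) = (\<Sum>i<n. (cmod (v i))\<^sup>2)"
    unfolding Re_sum by simp
  ultimately have "\<forall>i\<in>{..<n}. (cmod (v i))\<^sup>2 = 0" by (simp add: sum_nonneg_eq_0_iff)
  then show ?thesis by simp
qed

lemma one_minus_imag_mat:
  "B \<in> carrier_mat n n \<Longrightarrow> 1\<^sub>m n - imag_mat Z B = 1\<^sub>m n + imag_mat (- Z) B"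
  by (rule eq_matI) (auto simp: imag_mat_def)

lemma det_one_plus_imag_mat:
  assumes B: "B \<in> carrier_mat n n" and sym: "B = transpose_mat B"
  shows "det (1\<^sub>m n + imag_mat Z B) \<noteq> 0"
proof
  let ?X = "1\<^sub>m n + imag_mat Z B"
  have X: "?X \<in> carrier_mat n n" using imag_mat_carrier[OF B] by simp
  assume "det ?X = 0"
  then obtain v where v: "v \<in> carrier_vec n" "v \<noteq> 0\<^sub>v n" "?X *\<^sub>v v = 0\<^sub>v n"
    using det_0_iff_vec_prod_zero_field[OF X] by blast
  have "v $ i = \<i> * complex_of_real (- Z) * (\<Sum>j<n. complex_of_real (B $$ (i, j)) * v $ j)"
    if i: "i < n" for i
  proof -
    have "0 = row ?X i \<bullet> v" using v(3) X i by (metis carrier_matD(1) index_mult_mat_vec index_zero_vec(1))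
    also have "\<dots> = (\<Sum>j<n. ?X $$ (i, j) * v $ j)"
      unfolding scalar_prod_def using X v(1) i imag_mat_carrier[OF B, of Z]
      by (intro sum.cong) (auto simp: atLeast0LessThan)
    also have "\<dots> = (\<Sum>j<n. (if i = j then v $ j else 0)
        + \<i> * complex_of_real Z * (complex_of_real (B $$ (i, j)) * v $ j))"
      using B i imag_mat_carrier[OF B, of Z]
      by (intro sum.cong refl) (auto simp: index_imag_mat algebra_simps)
    also have "\<dots> = v $ i + \<i> * complex_of_real Z * (\<Sum>j<n. complex_of_real (B $$ (i, j)) * v $ j)"
      using i by (simp add: sum.distrib sum_distrib_left)
    finally show ?thesis by (simp add: algebra_simps eq_neg_iff_add_eq_0)
  qed
  then have "\<forall>i<n. v $ i = 0"
    using imag_sym_fixed_point_zero[of n "\<lambda>i j. B $$ (i, j)"] symmetric_mat_index[OF B sym] by blast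
  then have "v = 0\<^sub>v n" using v(1) by (intro eq_vecI) auto
  with v(2) show False by simp
qed

lemma mat_adjoint_one_plus_imag_mat:
  assumes B: "B \<in> carrier_mat n n" and sym: "B = transpose_mat B"
  shows "mat_adjoint (1\<^sub>m n + imag_mat Z B) = 1\<^sub>m n - imag_mat Z B"
proof (rule eq_matI)
  have C: "imag_mat Z B \<in> carrier_mat n n" using B by (rule imag_mat_carrier)
  fix i j assume "i < dim_row (1\<^sub>m n - imag_mat Z B)" "j < dim_col (1\<^sub>m n - imag_mat Z B)"
  then have i: "i < n" and j: "j < n" using C by auto
  then show "mat_adjoint (1\<^sub>m n + imag_mat Z B) $$ (i, j) = (1\<^sub>m n - imag_mat Z B) $$ (i, j)"
    using B C symmetric_mat_index[OF B sym i j] by (auto simp: index_imag_mat)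
qed (use imag_mat_carrier[OF B, of Z] in auto)

lemma mat_adjoint_one_minus_imag_mat:
  assumes B: "B \<in> carrier_mat n n" and sym: "B = transpose_mat B"
  shows "mat_adjoint (1\<^sub>m n - imag_mat Z B) = 1\<^sub>m n + imag_mat Z B"
  using mat_adjoint_one_plus_imag_mat[OF B sym, of "- Z"] one_minus_imag_mat[OF B, of Z]
    one_minus_imag_mat[OF B, of "- Z"] by simp

lemma theta_inverse_mult:
  assumes B: "B \<in> carrier_mat n n" and sym: "B = transpose_mat B"
  obtains Xi where "Xi \<in> carrier_mat n n" "Xi * (1\<^sub>m n + imag_mat Z B) = 1\<^sub>m n"
    "theta Z B = Xi * (1\<^sub>m n - imag_mat Z B)"
proof -
  let ?X = "1\<^sub>m n + imag_mat Z B"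
  have X: "?X \<in> carrier_mat n n" using imag_mat_carrier[OF B] by simp
  have "?X \<in> Units (ring_mat TYPE(complex) n ())"
    by (rule det_non_zero_imp_unit[OF X det_one_plus_imag_mat[OF B sym]])
  then obtain Xi where "mat_inverse ?X = Some Xi"
    using mat_inverse(1)[OF X, where b = "()"] by (cases "mat_inverse ?X") auto
  then show ?thesis using that mat_inverse(2)[OF X] theta_imag_mat[OF B, of Z] by auto
qed

lemma one_minus_imag_mat_mult_adjoint_theta:
  assumes B: "B \<in> carrier_mat n n" and sym: "B = transpose_mat B"
  shows "(1\<^sub>m n - imag_mat Z B) * mat_adjoint (theta Z B) = 1\<^sub>m n + imag_mat Z B"
proof -
  define C where "C = imag_mat Z B"
  define Xp where "Xp = 1\<^sub>m n + C"
  define Xm where "Xm = 1\<^sub>m n - C"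
  have C: "C \<in> carrier_mat n n" unfolding C_def using B by (rule imag_mat_carrier)
  have Xp: "Xp \<in> carrier_mat n n" and Xm: "Xm \<in> carrier_mat n n" using C by (auto simp: Xp_def Xm_def)
  obtain Xi where Xi: "Xi \<in> carrier_mat n n" "Xi * Xp = 1\<^sub>m n" and th: "theta Z B = Xi * Xm"
    using theta_inverse_mult[OF B sym, of Z] unfolding Xp_def Xm_def C_def by blast
  have Th: "theta Z B \<in> carrier_mat n n" using Xi Xm th by simp
  have "Xm * Xp = Xm * 1\<^sub>m n + Xm * C"
    unfolding Xp_def by (rule mult_add_distrib_mat[OF Xm one_carrier_mat C])
  also have "\<dots> = Xm + (1\<^sub>m n * C - C * C)"
    unfolding Xm_def using C by (simp add: minus_mult_distrib_mat[OF one_carrier_mat C C])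
  also have "\<dots> = Xp - (1\<^sub>m n * C + C * C)"
    unfolding Xp_def Xm_def using C by (intro eq_matI) auto
  also have "\<dots> = Xp * 1\<^sub>m n - Xp * C"
    unfolding Xp_def using C by (simp add: add_mult_distrib_mat[OF one_carrier_mat C C])
  also have "\<dots> = Xp * Xm"
    unfolding Xm_def by (rule mult_minus_distrib_mat[OF Xp one_carrier_mat C, symmetric])
  finally have comm: "Xm * Xp = Xp * Xm" .
  have "theta Z B * Xp = Xi * (Xp * Xm)"
    unfolding th comm[symmetric] using Xi Xm Xp by (simp add: assoc_mult_mat)
  also have "\<dots> = Xm" using Xi Xm Xp by (simp add: assoc_mult_mat[symmetric])
  finally have "mat_adjoint (theta Z B * Xp) = mat_adjoint Xm" by simp
  then show ?thesis
    using mat_adjoint_mult[OF Th Xp] mat_adjoint_one_plus_imag_mat[OF B sym]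
      mat_adjoint_one_minus_imag_mat[OF B sym] by (simp add: Xp_def Xm_def C_def)
qed

lemma theta_carrier:
  assumes "B \<in> carrier_mat n n" and "B = transpose_mat B"
  shows "theta Z B \<in> carrier_mat n n"
proof -
  obtain Xi where "Xi \<in> carrier_mat n n" "theta Z B = Xi * (1\<^sub>m n - imag_mat Z B)"
    using theta_inverse_mult[OF assms] by blast
  then show ?thesis using imag_mat_carrier[OF assms(1), of Z] by (simp add: minus_carrier_mat)
qed

lemma cayley_eq_adjoint_theta:
  assumes Hr: "Hr \<in> carrier_mat m n" and B: "B \<in> carrier_mat n n" and sym: "B = transpose_mat B"
  shows "(1\<^sub>m n - imag_mat Z B) * mat_adjoint (Hr * theta Z B) = (1\<^sub>m n + imag_mat Z B) * mat_adjoint Hr"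
proof -
  have Th: "theta Z B \<in> carrier_mat n n" using B sym by (rule theta_carrier)
  have X: "1\<^sub>m n - imag_mat Z B \<in> carrier_mat n n"
    using imag_mat_carrier[OF B, of Z] by (simp add: minus_carrier_mat)
  have "(1\<^sub>m n - imag_mat Z B) * mat_adjoint (Hr * theta Z B)
      = ((1\<^sub>m n - imag_mat Z B) * mat_adjoint (theta Z B)) * mat_adjoint Hr"
    unfolding mat_adjoint_mult[OF Hr Th]
    using assoc_mult_mat[OF X mat_adjoint_carrier[OF Th] mat_adjoint_carrier[OF Hr]] by simp
  then show ?thesis unfolding one_minus_imag_mat_mult_adjoint_theta[OF B sym] .
qed

lemma cayley_eq_unique:
  assumes B: "B \<in> carrier_mat n n" and sym: "B = transpose_mat B"
    and W: "W \<in> carrier_mat n m" "W' \<in> carrier_mat n m"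
    and eq: "(1\<^sub>m n - imag_mat Z B) * W = (1\<^sub>m n - imag_mat Z B) * W'"
  shows "W = W'"
proof -
  let ?X = "1\<^sub>m n - imag_mat Z B"
  have X: "?X \<in> carrier_mat n n" using imag_mat_carrier[OF B, of Z] by (simp add: minus_carrier_mat)
  have "det ?X \<noteq> 0" using det_one_plus_imag_mat[OF B sym, of "- Z"] one_minus_imag_mat[OF B] by simp
  then obtain Xi where Xi: "Xi \<in> carrier_mat n n" "Xi * ?X = 1\<^sub>m n"
    using det_nonzero_obtain_inverse[OF X] by blast
  have "W = (Xi * ?X) * W" by (simp only: Xi(2) left_mult_one_mat[OF W(1)])
  also have "\<dots> = Xi * (?X * W)" by (rule assoc_mult_mat[OF Xi(1) X W(1)])
  also have "\<dots> = Xi * (?X * W')" by (simp only: eq)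
  also have "\<dots> = W'" using assoc_mult_mat[OF Xi(1) X W(2)] Xi(2) W(2) by simp
  finally show ?thesis .
qed

lemma cayley_eq_iff_entries:
  assumes B: "B \<in> carrier_mat n n" and U: "U \<in> carrier_mat n m" and H: "H \<in> carrier_mat n m"
  shows "(1\<^sub>m n - imag_mat Z B) * U = (1\<^sub>m n + imag_mat Z B) * H \<longleftrightarrow>
    (\<forall>i<n. \<forall>s<m. U $$ (i, s) - H $$ (i, s)
       = (\<Sum>k<n. complex_of_real (B $$ (i, k)) * (\<i> * complex_of_real Z * (H $$ (k, s) + U $$ (k, s)))))"
proof -
  let ?C = "imag_mat Z B"
  have C: "?C \<in> carrier_mat n n" using B by (rule imag_mat_carrier)
  have CW: "(?C * W) $$ (i, s) = (\<Sum>k<n. \<i> * complex_of_real Z * complex_of_real (B $$ (i, k)) * W $$ (k, s))"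
    if "W \<in> carrier_mat n m" "i < n" "s < m" for W i s
    using index_mult_mat_sum[OF C that(1) that(2,3)] B that(2) by (simp add: index_imag_mat)
  have "(1\<^sub>m n - ?C) * U = U - ?C * U" using C U by (simp add: minus_mult_distrib_mat[OF one_carrier_mat C U])
  moreover have "(1\<^sub>m n + ?C) * H = H + ?C * H" using C H by (simp add: add_mult_distrib_mat[OF one_carrier_mat C H])
  moreover have "U - ?C * U = H + ?C * H \<longleftrightarrow>
      (\<forall>i<n. \<forall>s<m. U $$ (i, s) - (?C * U) $$ (i, s) = H $$ (i, s) + (?C * H) $$ (i, s))"
    using C U H by (auto simp: mat_eq_iff)
  moreover have "U $$ (i, s) - (?C * U) $$ (i, s) = H $$ (i, s) + (?C * H) $$ (i, s) \<longleftrightarrow>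
      U $$ (i, s) - H $$ (i, s)
       = (\<Sum>k<n. complex_of_real (B $$ (i, k)) * (\<i> * complex_of_real Z * (H $$ (k, s) + U $$ (k, s))))"
    if "i < n" "s < m" for i s
  proof -
    have "(\<Sum>k<n. complex_of_real (B $$ (i, k)) * (\<i> * complex_of_real Z * (H $$ (k, s) + U $$ (k, s))))
        = (?C * H) $$ (i, s) + (?C * U) $$ (i, s)"
      unfolding CW[OF U that] CW[OF H that] sum.distrib[symmetric]
      by (intro sum.cong refl) (simp add: algebra_simps)
    then show ?thesis by (simp add: algebra_simps)
  qed
  ultimately show ?thesis by simp
qed

definition R_U :: "complex mat \<Rightarrow> complex mat \<Rightarrow> real mat" where
  "R_U Hr U = (let X = U - mat_adjoint Hr; NI = dim_col Hr; Nt = dim_row Hr in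
     mat NI (2 * Nt) (\<lambda>(i, j). if j < Nt then Re (X $$ (i, j)) else Im (X $$ (i, j - Nt))))"

lemma all_less_double: "(\<forall>\<beta><2 * (n::nat). P \<beta>) \<longleftrightarrow> (\<forall>s<n. P s \<and> P (s + n))"
proof safe
  fix \<beta> assume P: "\<forall>s<n. P s \<and> P (s + n)" and \<beta>: "\<beta> < 2 * n"
  show "P \<beta>"
  proof (cases "\<beta> < n")
    case False
    then have "\<beta> - n < n" "\<beta> = (\<beta> - n) + n" using \<beta> by auto
    then show ?thesis using P by metis
  qed (use P in auto)
qed auto

lemma cayley_entries_iff_real:
  assumes Hr: "Hr \<in> carrier_mat Nt NI" and U: "U \<in> carrier_mat NI Nt" and B: "B \<in> carrier_mat NI NI"
  shows "(\<forall>i<NI. \<forall>s<Nt. U $$ (i, s) - mat_adjoint Hr $$ (i, s)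
       = (\<Sum>k<NI. complex_of_real (B $$ (i, k)) *
           (\<i> * complex_of_real Z * (mat_adjoint Hr $$ (k, s) + U $$ (k, s)))))
    \<longleftrightarrow> R_U Hr U = B * M_U Hr Z U"
proof -
  let ?H = "mat_adjoint Hr" and ?M = "M_U Hr Z U"
  define X where "X k s = \<i> * complex_of_real Z * (?H $$ (k, s) + U $$ (k, s))" for k s
  define S where "S i s = (\<Sum>k<NI. complex_of_real (B $$ (i, k)) * X k s)" for i s
  have dims: "dim_row Hr = Nt" "dim_col Hr = NI" using Hr by auto
  have M: "?M \<in> carrier_mat NI (2 * Nt)" by (simp add: M_U_def Let_def dims)
  have R: "R_U Hr U \<in> carrier_mat NI (2 * Nt)" by (simp add: R_U_def Let_def dims)
  have M_lo: "?M $$ (k, s) = Re (X k s)" and M_hi: "?M $$ (k, s + Nt) = Im (X k s)"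
    if "k < NI" "s < Nt" for k s
    using that U Hr by (simp_all add: M_U_def Let_def X_def)
  have R_lo: "R_U Hr U $$ (i, s) = Re (U $$ (i, s) - ?H $$ (i, s))"
    and R_hi: "R_U Hr U $$ (i, s + Nt) = Im (U $$ (i, s) - ?H $$ (i, s))"
    if "i < NI" "s < Nt" for i s
    using that U Hr by (simp_all add: R_U_def Let_def)
  have BM_lo: "(B * ?M) $$ (i, s) = Re (S i s)" and BM_hi: "(B * ?M) $$ (i, s + Nt) = Im (S i s)"
    if "i < NI" "s < Nt" for i s
    using index_mult_mat_sum[OF B M] M_lo M_hi that by (simp_all add: S_def Re_sum Im_sum)
  have "R_U Hr U = B * ?M \<longleftrightarrow> (\<forall>i<NI. \<forall>\<beta><2 * Nt. R_U Hr U $$ (i, \<beta>) = (B * ?M) $$ (i, \<beta>))"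
    using R B M by (auto simp: mat_eq_iff)
  also have "\<dots> \<longleftrightarrow> (\<forall>i<NI. \<forall>s<Nt. U $$ (i, s) - ?H $$ (i, s) = S i s)"
    unfolding all_less_double using R_lo R_hi BM_lo BM_hi by (auto simp: complex_eq_iff)
  finally show ?thesis by (simp add: S_def X_def)
qed

lemma eq_adjoint_theta_iff:
  assumes Hr: "Hr \<in> carrier_mat Nt NI" and U: "U \<in> carrier_mat NI Nt"
    and B: "B \<in> carrier_mat NI NI" and sym: "B = transpose_mat B"
  shows "U = mat_adjoint (Hr * theta Z B) \<longleftrightarrow> R_U Hr U = B * M_U Hr Z U"
proof -
  let ?C = "imag_mat Z B"
  have W: "mat_adjoint (Hr * theta Z B) \<in> carrier_mat NI Nt"
    using Hr theta_carrier[OF B sym, of Z] by (intro mat_adjoint_carrier) simp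
  have "U = mat_adjoint (Hr * theta Z B) \<longleftrightarrow> (1\<^sub>m NI - ?C) * U = (1\<^sub>m NI + ?C) * mat_adjoint Hr"
    using cayley_eq_adjoint_theta[OF Hr B sym] cayley_eq_unique[OF B sym U W] by metis
  also have "\<dots> \<longleftrightarrow> R_U Hr U = B * M_U Hr Z U"
    using cayley_eq_iff_entries[OF B U mat_adjoint_carrier[OF Hr]] cayley_entries_iff_real[OF Hr U B]
    by simp
  finally show ?thesis .
qed

lemma all_minors_nonzero_M_U:
  assumes "U \<in> U_fully Hr Z NI" "U \<notin> N_U Hr Z NI" "dim_col Hr = NI"
  shows "all_minors_nonzero (M_U Hr Z U)"
  unfolding all_minors_nonzero_def
proof (intro allI impI)
  fix I J assume I: "I \<subseteq> {..<dim_row (M_U Hr Z U)}" and J: "J \<subseteq> {..<dim_col (M_U Hr Z U)}"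
    and card: "card I = card J" and ne: "I \<noteq> {}"
  have I': "I \<subseteq> {..<NI}" and J': "J \<subseteq> {..<2 * dim_row Hr}"
    using I J assms(3) by (auto simp: M_U_def Let_def)
  have "1 \<le> card I" using ne I' finite_subset by (metis card_0_eq finite_lessThan less_one not_le)
  moreover have "card J \<le> 2 * dim_row Hr" using card_mono[OF _ J'] by simp
  ultimately show "det (submatrix (M_U Hr Z U) I J) \<noteq> 0"
    using assms(1,2) I' J' card unfolding N_U_def by auto
qed

lemma U_graph_of_all_minors_nonzero:
  assumes Hr: "Hr \<in> carrier_mat D NI" and D: "1 \<le> D" "2 * D < NI"
    and q: "bij_betw q {..<NI} {..<NI}" and E_sym: "\<forall>i<NI. \<forall>j<NI. E i j = E j i"
    and deg: "\<forall>a<NI. card (later_nbrs E q NI a) = min (2 * D - 1) (NI - Suc a)"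
    and U: "U \<in> U_fully Hr Z NI" and minors: "all_minors_nonzero (M_U Hr Z U)"
  shows "U \<in> U_graph Hr Z NI E"
proof -
  let ?M = "M_U Hr Z U" and ?R = "R_U Hr U"
  obtain B where B: "B \<in> carrier_mat NI NI" "B = transpose_mat B" and UB: "U = mat_adjoint (Hr * theta Z B)"
    using U by (auto simp: U_fully_def)
  have Uc: "U \<in> carrier_mat NI D"
    using UB Hr theta_carrier[OF B, of Z] by (simp add: mat_adjoint_carrier)
  have M: "?M \<in> carrier_mat NI (2 * D)" using Hr by (simp add: M_U_def Let_def)
  have BM: "(A * ?M) $$ (i, \<beta>) = (\<Sum>j<NI. A $$ (i, j) * ?M $$ (j, \<beta>))"
    if "A \<in> carrier_mat NI NI" "i < NI" "\<beta> < 2 * D" for A i \<beta>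
    using index_mult_mat_sum[OF that(1) M that(2,3)] .
  have "?R = B * ?M" using eq_adjoint_theta_iff[OF Hr Uc B, of Z] UB by simp
  then have R: "\<forall>i<NI. \<forall>\<beta><2 * D. ?R $$ (i, \<beta>) = (\<Sum>j<NI. B $$ (i, j) * ?M $$ (j, \<beta>))"
    using BM[OF B(1)] by simp
  obtain B' where B'_sym: "\<forall>i j. B' i j = B' j i"
    and B'_zero: "\<forall>i<NI. \<forall>j<NI. i \<noteq> j \<and> \<not> E i j \<longrightarrow> B' i j = 0"
    and B'_eq: "\<forall>i<NI. \<forall>\<beta><2 * D. (\<Sum>j<NI. B' i j * ?M $$ (j, \<beta>)) = ?R $$ (i, \<beta>)"
    using sparse_symmetric_solution[of ?M NI "2 * D" q E, OF _ _ _ _ q E_sym _ minors _ R]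
      M D deg symmetric_mat_index[OF B] by auto
  define Bg where "Bg = mat NI NI (\<lambda>(i, j). B' i j)"
  have Bg: "Bg \<in> carrier_mat NI NI" "Bg = transpose_mat Bg" using B'_sym by (auto simp: Bg_def)
  have "Bg \<in> B_graph NI E" using B'_zero by (auto simp: Bg_def B_graph_def)
  moreover have "?R = Bg * ?M"
  proof (rule eq_matI)
    fix i \<beta> assume "i < dim_row (Bg * ?M)" "\<beta> < dim_col (Bg * ?M)"
    then have "i < NI" "\<beta> < 2 * D" using Bg M by auto
    then show "?R $$ (i, \<beta>) = (Bg * ?M) $$ (i, \<beta>)" using B'_eq BM[OF Bg(1)] by (simp add: Bg_def)
  qed (use Hr Bg M in \<open>auto simp: R_U_def Let_def\<close>)
  then have "U = mat_adjoint (Hr * theta Z Bg)" using eq_adjoint_theta_iff[OF Hr Uc Bg, of Z] by simp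
  ultimately show ?thesis using Bg by (auto simp: U_graph_def)
qed

lemma U_fully_subset_U_graph_Un_N_U:
  assumes Hr: "Hr \<in> carrier_mat D NI" and D: "1 \<le> D"
    and q: "bij_betw q {..<NI} {..<NI}" and E_sym: "\<forall>i<NI. \<forall>j<NI. E i j = E j i"
    and deg: "\<forall>a<NI. card (later_nbrs E q NI a) = min (2 * D - 1) (NI - Suc a)"
  shows "U_fully Hr Z NI \<subseteq> U_graph Hr Z NI E \<union> N_U Hr Z NI"
proof
  fix U assume U: "U \<in> U_fully Hr Z NI"
  show "U \<in> U_graph Hr Z NI E \<union> N_U Hr Z NI"
  proof (cases "U \<in> N_U Hr Z NI")
    case False
    show ?thesis
    proof (cases "2 * D < NI")
      case True
      then show ?thesis
        using U_graph_of_all_minors_nonzero[OF Hr D True q E_sym deg U]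
          all_minors_nonzero_M_U[OF U False] Hr by auto
    next
      case False
      then have full: "\<forall>a. 0 \<le> a \<longrightarrow> a < NI \<longrightarrow> card (later_nbrs E q NI a) = NI - Suc a"
        using deg by auto
      have "q ` {0..<NI} = {..<NI}" using q by (simp add: bij_betw_def atLeast0LessThan)
      then have "E i j" if "i < NI" "j < NI" "i \<noteq> j" for i j
        using clique_of_later_nbrs_full[OF q E_sym full] that by auto
      then have "B \<in> B_graph NI E" if "B \<in> carrier_mat NI NI" for B
        using that by (auto simp: B_graph_def)
      then show ?thesis using U by (auto simp: U_fully_def U_graph_def)
    qed
  qed simp
qed

lemma perm_matrix_conj_index:
  fixes P Abar :: "real mat"
  assumes P: "perm_matrix n P" and A: "Abar \<in> carrier_mat n n"
  obtains p where "p permutes {..<n}"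
    "\<And>i j. i < n \<Longrightarrow> j < n \<Longrightarrow> (P * Abar * transpose_mat P) $$ (i, j) = Abar $$ (p i, p j)"
proof -
  obtain p where p: "p permutes {..<n}" and P_def: "P = mat n n (\<lambda>(i, j). if p i = j then 1 else 0)"
    using P unfolding perm_matrix_def by blast
  have p_lt: "p i < n" if "i < n" for i using permutes_in_image[OF p, of i] that by simp
  have Pc: "P \<in> carrier_mat n n" and PT: "transpose_mat P \<in> carrier_mat n n" by (simp_all add: P_def)
  have PA: "(P * Abar) $$ (i, l) = Abar $$ (p i, l)" if "i < n" "l < n" for i l
  proof -
    have "(P * Abar) $$ (i, l) = (\<Sum>k<n. if k = p i then Abar $$ (k, l) else 0)"
      unfolding index_mult_mat_sum[OF Pc A that] using that by (intro sum.cong refl) (auto simp: P_def)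
    then show ?thesis using p_lt[OF that(1)] by simp
  qed
  have "(P * Abar * transpose_mat P) $$ (i, j) = Abar $$ (p i, p j)" if "i < n" "j < n" for i j
  proof -
    have "(P * Abar * transpose_mat P) $$ (i, j) = (\<Sum>l<n. if l = p j then Abar $$ (p i, l) else 0)"
      unfolding index_mult_mat_sum[OF mult_carrier_mat[OF Pc A] PT that]
      using that PA by (intro sum.cong refl) (auto simp: P_def)
    then show ?thesis using p_lt[OF that(2)] by simp
  qed
  then show ?thesis using that p by blast
qed

lemma ordering_of_adj_mat:
  assumes P: "perm_matrix N P" and A: "Abar \<in> carrier_mat N N"
    and adj: "adj_mat N E = P * Abar * transpose_mat P"
  obtains q where "bij_betw q {..<N} {..<N}"
    "\<And>a b. a < N \<Longrightarrow> b < N \<Longrightarrow> Abar $$ (a, b) = of_bool (E (q a) (q b))"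
proof -
  obtain p where p: "p permutes {..<N}"
    and conj: "\<And>i j. i < N \<Longrightarrow> j < N \<Longrightarrow> (P * Abar * transpose_mat P) $$ (i, j) = Abar $$ (p i, p j)"
    using perm_matrix_conj_index[OF P A] by blast
  have p_bij: "bij_betw p {..<N} {..<N}" using p by (rule permutes_imp_bij)
  define q where "q = inv_into {..<N} p"
  have q_bij: "bij_betw q {..<N} {..<N}" unfolding q_def using p_bij by (rule bij_betw_inv_into)
  have pq: "p (q a) = a" if "a < N" for a
    unfolding q_def using bij_betw_inv_into_right[OF p_bij] that by simp
  have q_lt: "q a < N" if "a < N" for a using q_bij that by (auto simp: bij_betw_def)
  show ?thesis
  proof (rule that[OF q_bij])
    fix a b assume a: "a < N" and b: "b < N"
    have "Abar $$ (a, b) = adj_mat N E $$ (q a, q b)"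
      unfolding adj using conj[OF q_lt[OF a] q_lt[OF b]] pq a b by simp
    then show "Abar $$ (a, b) = of_bool (E (q a) (q b))"
      using q_lt a b by (simp add: adj_mat_def)
  qed
qed

lemma upper_row_sum_eq_card_later_nbrs:
  assumes Abar: "\<And>a b. a < N \<Longrightarrow> b < N \<Longrightarrow> Abar $$ (a, b) = of_bool (E (q a) (q b))"
    and a: "a < N"
  shows "(\<Sum>m\<in>{a + 2..N}. Abar $$ (a, m - 1)) = real (card (later_nbrs E q N a))"
proof -
  have "{a + 2..N} = Suc ` {Suc a..<N}"
    by (simp add: image_Suc_atLeastLessThan atLeastLessThanSuc_atLeastAtMost)
  then have "(\<Sum>m\<in>{a + 2..N}. Abar $$ (a, m - 1)) = (\<Sum>m\<in>Suc ` {Suc a..<N}. Abar $$ (a, m - 1))"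
    by (simp only:)
  also have "\<dots> = (\<Sum>b\<in>{Suc a..<N}. Abar $$ (a, b))" by (subst sum.reindex) auto
  also have "\<dots> = (\<Sum>b\<in>{Suc a..<N}. of_bool (E (q a) (q b)))"
    using Abar a by (intro sum.cong refl) auto
  also have "{Suc a..<N} \<inter> {b. E (q a) (q b)} = later_nbrs E q N a"
    by (auto simp: later_nbrs_def)
  then have "(\<Sum>b\<in>{Suc a..<N}. of_bool (E (q a) (q b))) = real (card (later_nbrs E q N a))"
    by simp
  finally show ?thesis .
qed

lemma card_later_nbrs_of_graph_hyp:
  assumes P: "perm_matrix N P" and A: "Abar \<in> carrier_mat N N"
    and adj: "adj_mat N E = P * Abar * transpose_mat P"
    and rows: "\<forall>n\<in>{1..N-1}. (\<Sum>m\<in>{n+1..N}. Abar $$ (n-1, m-1)) = min (2 * L - 1) (real N - real n)"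
    and L: "L = min (real D) (real N / 2)" and D: "1 \<le> D"
  obtains q where "bij_betw q {..<N} {..<N}"
    "\<forall>a<N. card (later_nbrs E q N a) = min (2 * D - 1) (N - Suc a)"
proof -
  obtain q where q: "bij_betw q {..<N} {..<N}"
    and Abar: "\<And>a b. a < N \<Longrightarrow> b < N \<Longrightarrow> Abar $$ (a, b) = of_bool (E (q a) (q b))"
    using ordering_of_adj_mat[OF P A adj] by blast
  have "card (later_nbrs E q N a) = min (2 * D - 1) (N - Suc a)" if a: "a < N" for a
  proof (cases "Suc a = N")
    case True
    then show ?thesis by (simp add: later_nbrs_def)
  next
    case False
    then have "Suc a \<in> {1..N-1}" using a by auto
    then have "(\<Sum>m\<in>{Suc a + 1..N}. Abar $$ (Suc a - 1, m - 1)) = min (2 * L - 1) (real N - real (Suc a))"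
      using rows by blast
    then have "real (card (later_nbrs E q N a)) = min (2 * L - 1) (real N - real (Suc a))"
      using upper_row_sum_eq_card_later_nbrs[where Abar = Abar and E = E and q = q, OF Abar a] by simp
    also have "\<dots> = min (2 * real D - 1) (real N - real (Suc a))"
      using L by (cases "real D \<le> real N / 2") (auto simp: min_def)
    also have "\<dots> = real (min (2 * D - 1) (N - Suc a))"
      using D a by (simp add: of_nat_diff)
    finally show ?thesis by linarith
  qed
  then show ?thesis using that q by blast
qed

theorem theorem2:
  fixes NI NT :: nat and Ns :: "nat list" and Z0 :: real
    and Hd Hr G :: "complex mat" and E :: "nat \<Rightarrow> nat \<Rightarrow> bool"
  assumes "NI \<ge> 1" and "NT \<ge> 1" and "Ns \<noteq> []" and "\<forall>k\<in>set Ns. k \<ge> 1" and "Z0 > 0"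
    and "Hd \<in> carrier_mat (sum_list Ns) NT"
    and "Hr \<in> carrier_mat (sum_list Ns) NI"
    and "G \<in> carrier_mat NI NT"
    and "min (sum_list Ns) NT = sum_list Ns"
    and "simple_graph NI E"
    and "\<exists>P Abar. perm_matrix NI P \<and> Abar \<in> carrier_mat NI NI \<and>
           adj_mat NI E = P * Abar * transpose_mat P \<and>
           (\<forall>n\<in>{1..NI-1}. (\<Sum>m\<in>{n+1..NI}. Abar $$ (n-1, m-1)) =
               min (2 * L_val NI NT Ns - 1) (real NI - real n))"
  shows "U_fully Hr Z0 NI = U_graph Hr Z0 NI E \<union> N_U Hr Z0 NI
     \<and> H_set Hd G (U_fully Hr Z0 NI) = H_set Hd G (U_graph Hr Z0 NI E) \<union> H_set Hd G (N_U Hr Z0 NI)"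
proof -
  have D: "1 \<le> sum_list Ns"
    using assms(3,4) by (metis list.set_sel(1) member_le_sum_list order_trans zero_le)
  obtain P Abar where P: "perm_matrix NI P" and A: "Abar \<in> carrier_mat NI NI"
    and adj: "adj_mat NI E = P * Abar * transpose_mat P"
    and rows: "\<forall>n\<in>{1..NI-1}. (\<Sum>m\<in>{n+1..NI}. Abar $$ (n-1, m-1)) =
               min (2 * L_val NI NT Ns - 1) (real NI - real n)"
    using assms(11) by blast
  have L: "L_val NI NT Ns = min (real (sum_list Ns)) (real NI / 2)"
    using assms(9) by (simp add: L_val_def)
  obtain q where q: "bij_betw q {..<NI} {..<NI}"
    and deg: "\<forall>a<NI. card (later_nbrs E q NI a) = min (2 * sum_list Ns - 1) (NI - Suc a)"
    using card_later_nbrs_of_graph_hyp[OF P A adj rows L D] by blast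
  have E_sym: "\<forall>i<NI. \<forall>j<NI. E i j = E j i" using assms(10) by (simp add: simple_graph_def)
  have "U_graph Hr Z0 NI E \<subseteq> U_fully Hr Z0 NI" "N_U Hr Z0 NI \<subseteq> U_fully Hr Z0 NI"
    by (auto simp: U_graph_def U_fully_def N_U_def)
  then have "U_fully Hr Z0 NI = U_graph Hr Z0 NI E \<union> N_U Hr Z0 NI"
    using U_fully_subset_U_graph_Un_N_U[OF assms(7) D q E_sym deg] by blast
  then show ?thesis unfolding H_set_def by (simp add: image_Un)
qed

end
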